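(* Let $\mathcal{L}$ be a homogeneous, translation-invariant linear equation $c_1x_1+\cdots+c_\ell x_\ell=0$, and let $S$ be a finite $\mathcal{L}$-free set of integers. Then for all but finitely many positive integers $\alpha$, the set $S+\alpha=\{s+\alpha:s\in S\}$ is $\mathcal{L}$-sub-equation-free.
   Context: $\mathcal{L}$ is translation-invariant if $\sum_i c_i=0$. A solution of an equation $d_1x_1+\dots+d_m x_m=0$ in $A$ is a tuple in $A^m$ satisfying it; it is trivial if there is a partition $P_1,\dots,P_k$ of $\{1,\dots,m\}$ with $x_i=x_j$ whenever $i,j$ are in the same class and $\sum_{i\in P_r}d_i=0$ for every $r$. $A$ is $\mathcal{L}$-free if it contains no non-trivial solution to $\mathcal{L}$. A proper sub-equation of $\mathcal{L}$ is obtained by deleting a non-empty set of terms (leaving at least one). A set is $\mathcal{L}$-sub-equation-free if it is $\mathcal{L}$-free and contains no non-trivial solution to any proper sub-equation of $\mathcal{L}$. *)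

theory Defs
  imports Main "HOL-Library.Sublist"
begin

text \<open>A linear equation d_1 x_1 + ... + d_m x_m = 0 with integer coefficients is
represented by its coefficient list d (0-indexed).\<close>

definition is_solution :: "int list \<Rightarrow> int set \<Rightarrow> int list \<Rightarrow> bool" where
  "is_solution d A x \<longleftrightarrow> length x = length d \<and> set x \<subseteq> A \<and>
     (\<Sum>i<length d. d ! i * x ! i) = 0"

text \<open>Trivial: there is a partition of the index set (given by a labelling p, whose
classes are the fibres) such that indices in the same class carry equal values and
the coefficients in each class sum to zero.\<close>

definition trivial_solution :: "int list \<Rightarrow> int list \<Rightarrow> bool" where
  "trivial_solution d x \<longleftrightarrow> (\<exists>p :: nat \<Rightarrow> nat.
     (\<forall>i<length d. \<forall>j<length d. p i = p j \<longrightarrow> x ! i = x ! j) \<and>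
     (\<forall>r. (\<Sum>i\<in>{i. i < length d \<and> p i = r}. d ! i) = 0))"

definition translation_invariant :: "int list \<Rightarrow> bool" where
  "translation_invariant c \<longleftrightarrow> sum_list c = 0"

definition eq_free :: "int list \<Rightarrow> int set \<Rightarrow> bool" where
  "eq_free d A \<longleftrightarrow> (\<forall>x. is_solution d A x \<longrightarrow> trivial_solution d x)"

text \<open>Proper sub-equation: delete a non-empty set of terms, leaving at least one,
i.e. keep the terms indexed by J with J non-empty and J a proper subset.\<close>

definition proper_subeq :: "int list \<Rightarrow> int list \<Rightarrow> bool" where
  "proper_subeq c d \<longleftrightarrow> (\<exists>J. J \<subseteq> {..<length c} \<and> J \<noteq> {} \<and> J \<noteq> {..<length c}
     \<and> d = nths c J)"

definition subeq_free :: "int list \<Rightarrow> int set \<Rightarrow> bool" where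
  "subeq_free c A \<longleftrightarrow> eq_free c A \<and> (\<forall>d. proper_subeq c d \<longrightarrow> eq_free d A)"

end

theory Submission
  imports Defs "HOL-Library.Nat_Bijection"
begin

text \<open>Let M bound the moduli of the elements of S. A solution of a sub-equation d in S + \<alpha>
  is y + \<alpha> for some y in S, and then \<Sum>d_i y_i = -\<alpha> \<Sum>d_i, whose modulus is at most \<Sum>|c_i| M.
  So once \<alpha> exceeds \<Sum>|c_i| M, only translation-invariant sub-equations have solutions in
  S + \<alpha>, and these are exactly the translates of their solutions in S. Finally a
  translation-invariant sub-equation inherits freeness from c: padding a solution with a
  fixed element of S at the deleted positions gives a solution of c, because the deleted
  coefficients sum to zero; triviality of the padded solution restricts back.\<close>

lemma trivial_solution_iff_class_sums:
  "trivial_solution d x \<longleftrightarrow> (\<forall>v. (\<Sum>i | i < length d \<and> x ! i = v. d ! i) = 0)"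
proof
  assume "trivial_solution d x"
  then obtain p :: "nat \<Rightarrow> nat" where
    p_const: "\<And>i j. i < length d \<Longrightarrow> j < length d \<Longrightarrow> p i = p j \<Longrightarrow> x ! i = x ! j" and
    p_sums: "\<And>r. (\<Sum>i | i < length d \<and> p i = r. d ! i) = 0"
    unfolding trivial_solution_def by blast
  show "\<forall>v. (\<Sum>i | i < length d \<and> x ! i = v. d ! i) = 0"
  proof
    fix v
    let ?V = "{i. i < length d \<and> x ! i = v}"
    have "(\<Sum>i\<in>?V. d ! i) = (\<Sum>r\<in>p ` ?V. \<Sum>i | i \<in> ?V \<and> p i = r. d ! i)"
      by (rule sum.group[symmetric]) auto
    also have "\<dots> = (\<Sum>r\<in>p ` ?V. 0)"
    proof (rule sum.cong)
      fix r assume "r \<in> p ` ?V"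
      then obtain j where j: "j < length d" "x ! j = v" "p j = r" by auto
      \<comment> \<open>a value class is a union of whole classes of the partition\<close>
      have "{i. i \<in> ?V \<and> p i = r} = {i. i < length d \<and> p i = r}"
        using p_const[of _ j] j by auto
      then show "(\<Sum>i | i \<in> ?V \<and> p i = r. d ! i) = 0"
        using p_sums by simp
    qed simp
    finally show "(\<Sum>i\<in>?V. d ! i) = 0" by simp
  qed
next
  assume sums: "\<forall>v. (\<Sum>i | i < length d \<and> x ! i = v. d ! i) = 0"
  have "{i. i < length d \<and> int_encode (x ! i) = r} = {i. i < length d \<and> x ! i = int_decode r}"
    for r by (auto simp: int_decode_inverse)
  with sums show "trivial_solution d x"
    unfolding trivial_solution_def
    by (intro exI[of _ "\<lambda>i. int_encode (x ! i)"]) (simp add: int_encode_eq)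
qed

lemma trivial_solution_iff_zip:
  assumes "length x = length d"
  shows "trivial_solution d x \<longleftrightarrow> (\<forall>v. (\<Sum>(a, w)\<leftarrow>zip d x. if w = v then a else 0) = 0)"
proof -
  have "(\<Sum>i | i < length d \<and> x ! i = v. d ! i) = (\<Sum>(a, w)\<leftarrow>zip d x. if w = v then a else 0)"
    for v using assms
    by (simp add: sum_list_sum_nth atLeast0LessThan sum.inter_filter[symmetric]
        Collect_conj_eq lessThan_def Int_commute)
  then show ?thesis by (simp add: trivial_solution_iff_class_sums)
qed

lemma is_solution_iff_zip:
  "is_solution d A x \<longleftrightarrow>
     length x = length d \<and> set x \<subseteq> A \<and> (\<Sum>(a, v)\<leftarrow>zip d x. a * v) = 0"
  by (auto simp: is_solution_def sum_list_sum_nth atLeast0LessThan)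

lemma weighted_sum_translate:
  fixes d y :: "int list"
  assumes "length y = length d"
  shows "(\<Sum>(a, v)\<leftarrow>zip d (map (\<lambda>t. t + \<alpha>) y). a * v) = (\<Sum>(a, v)\<leftarrow>zip d y. a * v) + \<alpha> * sum_list d"
  using assms
proof (induction d arbitrary: y)
  case (Cons a d)
  then show ?case by (cases y) (auto simp: algebra_simps)
qed simp

lemma trivial_solution_translate:
  fixes d y :: "int list"
  assumes "length y = length d"
  shows "trivial_solution d (map (\<lambda>t. t + \<alpha>) y) \<longleftrightarrow> trivial_solution d y"
proof -
  have "(\<Sum>(a, w)\<leftarrow>zip d (map (\<lambda>t. t + \<alpha>) y). if w = v then a else 0)
        = (\<Sum>(a, w)\<leftarrow>zip d y. if w = v - \<alpha> then a else 0)" for v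
    by (simp add: zip_map2 case_prod_unfold comp_def algebra_simps cong: if_cong)
  then show ?thesis
    using assms by (simp add: trivial_solution_iff_zip) (metis add_diff_cancel_right')
qed

lemma abs_weighted_sum_le:
  fixes d y :: "int list"
  assumes "length y = length d" and "set y \<subseteq> S" and "\<forall>s\<in>S. \<bar>s\<bar> \<le> M"
  shows "\<bar>\<Sum>(a, v)\<leftarrow>zip d y. a * v\<bar> \<le> sum_list (map abs d) * M"
  using assms
proof (induction d arbitrary: y)
  case (Cons a d)
  then obtain b y' where y: "y = b # y'" by (cases y) auto
  with Cons.prems have "\<bar>a * b\<bar> \<le> \<bar>a\<bar> * M"
    by (auto simp: abs_mult intro: mult_left_mono)
  with Cons.IH[of y'] Cons.prems y show ?case by (auto simp: algebra_simps)
qed simp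

lemma eq_free_translate:
  fixes d :: "int list"
  assumes bound: "\<forall>s\<in>S. \<bar>s\<bar> \<le> M"
    and large: "sum_list (map abs d) * M < \<alpha>"
    and free: "sum_list d = 0 \<Longrightarrow> eq_free d S"
  shows "eq_free d ((\<lambda>s. s + \<alpha>) ` S)"
  unfolding eq_free_def
proof (intro allI impI)
  fix x assume "is_solution d ((\<lambda>s. s + \<alpha>) ` S) x"
  then have len: "length x = length d" and x_in: "set x \<subseteq> (\<lambda>s. s + \<alpha>) ` S"
    and x_sol: "(\<Sum>(a, v)\<leftarrow>zip d x. a * v) = 0"
    by (auto simp: is_solution_iff_zip)
  define y where "y = map (\<lambda>t. t - \<alpha>) x"
  have x_eq: "x = map (\<lambda>t. t + \<alpha>) y" by (simp add: y_def comp_def)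
  have len_y: "length y = length d" and y_in: "set y \<subseteq> S"
    using len x_in by (auto simp: y_def)
  let ?W = "\<Sum>(a, v)\<leftarrow>zip d y. a * v"
  have W: "?W + \<alpha> * sum_list d = 0"
    using x_sol weighted_sum_translate[OF len_y] by (simp add: x_eq)
  have "\<bar>\<alpha> * sum_list d\<bar> < \<alpha>"
    using abs_weighted_sum_le[OF len_y y_in bound] large W by linarith
  then have d0: "sum_list d = 0"
    by (smt (verit) mult_le_cancel_left1 mult_minus_right)
  with W len_y y_in have "is_solution d S y"
    by (simp add: is_solution_iff_zip)
  with free[OF d0] have "trivial_solution d y"
    unfolding eq_free_def by blast
  then show "trivial_solution d x"
    by (simp add: x_eq trivial_solution_translate[OF len_y])
qed

text \<open>A right inverse of nths: a list of the length of c carrying ys at the positions in J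
  and the padding value s at all other positions.\<close>

fun fill_outside :: "'a list \<Rightarrow> nat set \<Rightarrow> 'b list \<Rightarrow> 'b \<Rightarrow> 'b list" where
  "fill_outside [] J ys s = []"
| "fill_outside (c # cs) J ys s =
     (if 0 \<in> J then hd ys # fill_outside cs {j. Suc j \<in> J} (tl ys) s
      else s # fill_outside cs {j. Suc j \<in> J} ys s)"

lemma length_fill_outside [simp]: "length (fill_outside c J ys s) = length c"
  by (induction c arbitrary: J ys) auto

lemma set_fill_outside:
  "length ys = length (nths c J) \<Longrightarrow> set (fill_outside c J ys s) \<subseteq> set ys \<union> {s}"
proof (induction c arbitrary: J ys)
  case (Cons a c)
  show ?case
  proof (cases "0 \<in> J")
    case True
    with Cons.prems obtain y ys' where "ys = y # ys'"
      by (cases ys) (auto simp: nths_Cons)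
    with True Cons show ?thesis by (auto simp: nths_Cons)
  qed (use Cons in \<open>auto simp: nths_Cons\<close>)
qed simp

lemma sum_list_zip_fill_outside:
  fixes f :: "'a \<times> 'b \<Rightarrow> 'c::comm_monoid_add"
  shows "length ys = length (nths c J) \<Longrightarrow>
    (\<Sum>p\<leftarrow>zip c (fill_outside c J ys s). f p) =
    (\<Sum>p\<leftarrow>zip (nths c J) ys. f p) + (\<Sum>a\<leftarrow>nths c {i. i \<notin> J}. f (a, s))"
proof (induction c arbitrary: J ys)
  case (Cons a c)
  show ?case
  proof (cases "0 \<in> J")
    case True
    with Cons.prems obtain y ys' where "ys = y # ys'"
      by (cases ys) (auto simp: nths_Cons)
    with True Cons show ?thesis by (auto simp: nths_Cons add_ac)
  qed (use Cons in \<open>auto simp: nths_Cons add_ac\<close>)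
qed simp

lemma eq_free_nths:
  fixes c :: "int list"
  assumes c0: "sum_list c = 0" and d0: "sum_list (nths c J) = 0" and free: "eq_free c S"
  shows "eq_free (nths c J) S"
  unfolding eq_free_def
proof (intro allI impI)
  fix y assume "is_solution (nths c J) S y"
  then have len: "length y = length (nths c J)" and y_in: "set y \<subseteq> S"
    and y_sol: "(\<Sum>(a, v)\<leftarrow>zip (nths c J) y. a * v) = 0"
    by (auto simp: is_solution_iff_zip)
  show "trivial_solution (nths c J) y"
  proof (cases "S = {}")
    case True
    with y_in len show ?thesis by (simp add: trivial_solution_iff_zip)
  next
    case False
    then obtain s where "s \<in> S" by blast
    define x where "x = fill_outside c J y s"
    note split_sum = sum_list_zip_fill_outside[OF len, of _ s, folded x_def]
    \<comment> \<open>the deleted coefficients sum to zero, so the padding entries contribute nothing\<close>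
    have rest0: "sum_list (nths c {i. i \<notin> J}) = 0"
      using split_sum[of fst] len c0 d0 by (simp add: x_def)
    have "is_solution c S x"
      using split_sum[of "\<lambda>(a, v). a * v"] y_sol rest0 set_fill_outside[OF len, of s] y_in \<open>s \<in> S\<close>
      by (auto simp: is_solution_iff_zip x_def sum_list_mult_const)
    with free have "trivial_solution c x"
      unfolding eq_free_def by blast
    moreover have "(\<Sum>a\<leftarrow>nths c {i. i \<notin> J}. if s = v then a else 0) = 0" for v
      using rest0 by (cases "s = v") simp_all
    ultimately show ?thesis
      using split_sum[of "\<lambda>(a, w). if w = v then a else 0" for v] len
      by (simp add: trivial_solution_iff_zip x_def)
  qed
qed

lemma sum_list_abs_nths_le:
  fixes c :: "'a::linordered_idom list"
  shows "sum_list (map abs (nths c J)) \<le> sum_list (map abs c)"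
proof (induction c arbitrary: J)
  case (Cons a c)
  then show ?case by (auto simp: nths_Cons add_increasing)
qed simp

theorem mainTheorem11:
  fixes c :: "int list" and S :: "int set"
  assumes "translation_invariant c"
    and "finite S"
    and "eq_free c S"
  shows "finite {\<alpha>::int. \<alpha> > 0 \<and> \<not> subeq_free c ((\<lambda>s. s + \<alpha>) ` S)}"
proof -
  define M where "M = (\<Sum>s\<in>S. \<bar>s\<bar>)"
  have bound: "\<forall>s\<in>S. \<bar>s\<bar> \<le> M"
    using \<open>finite S\<close> by (auto simp: M_def intro: member_le_sum)
  have "M \<ge> 0" by (simp add: M_def sum_nonneg)
  have "subeq_free c ((\<lambda>s. s + \<alpha>) ` S)" if large: "sum_list (map abs c) * M < \<alpha>" for \<alpha>
  proof -
    have "sum_list (map abs (nths c J)) * M < \<alpha>" for J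
      using sum_list_abs_nths_le[of c J] \<open>M \<ge> 0\<close> large
      by (meson le_less_trans mult_right_mono)
    then have "eq_free (nths c J) ((\<lambda>s. s + \<alpha>) ` S)" for J
      using eq_free_translate[OF bound] eq_free_nths assms(1,3)
      by (simp add: translation_invariant_def)
    moreover have "eq_free c ((\<lambda>s. s + \<alpha>) ` S)"
      using eq_free_translate[OF bound large] assms(3) .
    ultimately show ?thesis
      unfolding subeq_free_def proper_subeq_def by blast
  qed
  then have "{\<alpha>. \<alpha> > 0 \<and> \<not> subeq_free c ((\<lambda>s. s + \<alpha>) ` S)} \<subseteq> {0..sum_list (map abs c) * M}"
    by auto (meson not_le)
  then show ?thesis
    by (rule finite_subset) simp
qed

end
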